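(* Let $M$ be a root of unity toric frame of $\mathcal F$, $k\in[1,N]$, and $g=(n_1,\dots,n_N)\in\mathbb Z^N$ such that $\Lambda_M(g,e_j)\equiv0\pmod\ell$ for all $j\neq k$ and $n_k=0$. Then for each sign $s\in\{+,-\}$ there is a unique ($\mathbb Q(\varepsilon^{1/2})$-algebra) automorphism $\rho$ of $\mathcal F$ such that $\rho(M(e_k))=M(e_k)+M(e_k+sg)$ and $\rho(M(e_j))=M(e_j)$ for $j\ne k$.
   Context: Let $\ell$ be a positive integer, $\mathbb Z_\ell=\mathbb Z/\ell\mathbb Z$, $\varepsilon^{1/2}\in\mathbb C$ a primitive $\ell$-th root of unity, $\mathcal A^{1/2}_\varepsilon=\mathbb Z[\varepsilon^{1/2}]$, $\varepsilon^{a/2}=(\varepsilon^{1/2})^a$ for $a\in\mathbb Z_\ell$; $e_1,\dots,e_N$ is the standard basis of $\mathbb Z^N$. For a skew-symmetric bilinear form $\Lambda:\mathbb Z^N\times\mathbb Z^N\to\mathbb Z_\ell$, $\mathcal T_\varepsilon(\Lambda)$ is the $\mathcal A^{1/2}_\varepsilon$-algebra with basis $\{X^f\}_{f\in\mathbb Z^N}$ and $X^fX^g=\varepsilon^{\Lambda(f,g)/2}X^{f+g}$. A root of unity toric frame of a division algebra $\mathcal F$ over $\mathbb Q(\varepsilon^{1/2})$ is a map $M:\mathbb Z^N\to\mathcal F$ such that for some (unique) skew-symmetric $\Lambda=:\Lambda_M$ there is an injective $\mathcal A^{1/2}_\varepsilon$-algebra map $\phi:\mathcal T_\varepsilon(\Lambda)\to\mathcal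 F$, $\phi(X^f)=M(f)$ for all $f$, with $\mathcal F$ the skew field of fractions of its image. *)

theory Defs
  imports Complex_Main "HOL-Computational_Algebra.Polynomial" "HOL-Number_Theory.Cong" "HOL-Library.Function_Algebras"
begin

text \<open>\<zeta> plays the role of \<open>\<epsilon>^{1/2}\<close>, a primitive \<open>\<ell>\<close>-th root of unity.\<close>
definition primitive_root_of_unity :: "nat \<Rightarrow> complex \<Rightarrow> bool" where
  "primitive_root_of_unity l z \<longleftrightarrow> z ^ l = 1 \<and> (\<forall>m. 0 < m \<and> m < l \<longrightarrow> z ^ m \<noteq> 1)"

text \<open>The ring \<open>\<A>^{1/2}_\<epsilon> = \<int>[\<zeta>]\<close> and the field \<open>\<rat>(\<zeta>)\<close> (as subsets of \<open>\<complex>\<close>).\<close>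
definition Zring :: "complex \<Rightarrow> complex set" where
  "Zring z = {poly (map_poly of_int p) z | p :: int poly. True}"

definition Qfield :: "complex \<Rightarrow> complex set" where
  "Qfield z = {x. \<exists>p q :: rat poly. poly (map_poly of_rat q) z \<noteq> 0 \<and>
                  x = poly (map_poly of_rat p) z / poly (map_poly of_rat q) z}"

text \<open>The division ring \<open>'a\<close> is an algebra over \<open>\<rat>(\<zeta>)\<close> via the structure map \<open>\<iota>\<close>
  (a unital ring homomorphism on \<open>\<rat>(\<zeta>)\<close> with central image).\<close>
definition K_algebra :: "complex \<Rightarrow> (complex \<Rightarrow> 'a::division_ring) \<Rightarrow> bool" where
  "K_algebra z \<iota> \<longleftrightarrow> \<iota> 1 = 1 \<and>
     (\<forall>a\<in>Qfield z. \<forall>b\<in>Qfield z. \<iota> (a + b) = \<iota> a + \<iota> b \<and> \<iota> (a * b) = \<iota> a * \<iota> b) \<and>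
     (\<forall>a\<in>Qfield z. \<forall>x. \<iota> a * x = x * \<iota> a)"

text \<open>Standard basis vector \<open>e_j\<close> of \<open>\<int>^N\<close>, with \<open>\<int>^N\<close> = \<open>'n \<Rightarrow> int\<close>, \<open>N = CARD('n)\<close>.\<close>
definition ebasis :: "'n \<Rightarrow> ('n \<Rightarrow> int)" where
  "ebasis j = (\<lambda>i. if i = j then 1 else 0)"

text \<open>Skew-symmetric bilinear form \<open>\<int>^N \<times> \<int>^N \<rightarrow> \<int>_\<ell>\<close>, represented by integer representatives.\<close>
definition skew_bilinear_mod :: "nat \<Rightarrow> (('n \<Rightarrow> int) \<Rightarrow> ('n \<Rightarrow> int) \<Rightarrow> int) \<Rightarrow> bool" where
  "skew_bilinear_mod l \<Lambda> \<longleftrightarrow>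
     (\<forall>f g h. [\<Lambda> (f + g) h = \<Lambda> f h + \<Lambda> g h] (mod int l)) \<and>
     (\<forall>f g h. [\<Lambda> f (g + h) = \<Lambda> f g + \<Lambda> f h] (mod int l)) \<and>
     (\<forall>f g. [\<Lambda> f g = - \<Lambda> g f] (mod int l))"

text \<open>Image of the quantum torus \<open>\<T>_\<epsilon>(\<Lambda>)\<close> under \<open>\<phi>(\<Sum> c_f X^f) = \<Sum> \<iota>(c_f) M(f)\<close>.\<close>
definition torus_image :: "complex \<Rightarrow> (complex \<Rightarrow> 'a::division_ring) \<Rightarrow> (('n \<Rightarrow> int) \<Rightarrow> 'a) \<Rightarrow> 'a set" where
  "torus_image z \<iota> M = {(\<Sum>f\<in>S. \<iota> (c f) * M f) | S c. finite S \<and> (\<forall>f\<in>S. c f \<in> Zring z)}"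

text \<open>\<open>M\<close> is a root of unity toric frame with form \<open>\<Lambda>_M = \<Lambda>\<close>: the \<open>\<A>^{1/2}_\<epsilon>\<close>-linear map
  \<open>\<phi> : \<T>_\<epsilon>(\<Lambda>) \<rightarrow> F\<close>, \<open>X^f \<mapsto> M(f)\<close>, is a (unital) algebra homomorphism (i.e. \<open>M 0 = 1\<close> and
  \<open>M(f) M(g) = \<epsilon>^{\<Lambda>(f,g)/2} M(f+g)\<close>), it is injective (the \<open>M(f)\<close> are \<open>\<A>^{1/2}_\<epsilon>\<close>-linearly
  independent), and \<open>F\<close> is the skew field of (right) fractions of its image.\<close>
definition toric_frame ::
  "nat \<Rightarrow> complex \<Rightarrow> (complex \<Rightarrow> 'a::division_ring) \<Rightarrow> (('n \<Rightarrow> int) \<Rightarrow> 'a)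
     \<Rightarrow> (('n \<Rightarrow> int) \<Rightarrow> ('n \<Rightarrow> int) \<Rightarrow> int) \<Rightarrow> bool" where
  "toric_frame l z \<iota> M \<Lambda> \<longleftrightarrow>
     skew_bilinear_mod l \<Lambda> \<and>
     M 0 = 1 \<and>
     (\<forall>f g. M f * M g = \<iota> (z powi \<Lambda> f g) * M (f + g)) \<and>
     (\<forall>S c. finite S \<longrightarrow> (\<forall>f\<in>S. c f \<in> Zring z) \<longrightarrow>
        (\<Sum>f\<in>S. \<iota> (c f) * M f) = 0 \<longrightarrow> (\<forall>f\<in>S. c f = 0)) \<and>
     (\<forall>x. \<exists>a\<in>torus_image z \<iota> M. \<exists>b\<in>torus_image z \<iota> M. b \<noteq> 0 \<and> x = a * inverse b)"

definition K_alg_automorphism :: "complex \<Rightarrow> (complex \<Rightarrow> 'a::division_ring) \<Rightarrow> ('a \<Rightarrow> 'a) \<Rightarrow> bool" where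
  "K_alg_automorphism z \<iota> \<rho> \<longleftrightarrow> bij \<rho> \<and> \<rho> 1 = 1 \<and>
     (\<forall>x y. \<rho> (x + y) = \<rho> x + \<rho> y) \<and> (\<forall>x y. \<rho> (x * y) = \<rho> x * \<rho> y) \<and>
     (\<forall>a\<in>Qfield z. \<forall>x. \<rho> (\<iota> a * x) = \<iota> a * \<rho> x)"

end

theory Submission
  imports Defs
begin

(* Write zeta for the square root of epsilon, h = s g and q = zeta^(2 Lambda(h, e_k)).
   Because Lambda(h, e_j) = 0 for j <> k, the element M(h) q-commutes with every M(v) through a
   factor depending on v_k only: M(h) M(v) = q^(v_k) M(v) M(h).  Hence the elements
   Q_x = 1 + zeta^(-Lambda(e_k, h)) q^x M(h) satisfy Q_x M(v) = M(v) Q_(x + v_k), and with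
   R_n = Q_0 Q_1 ... Q_(n-1) (and R_(-n) = (Q_(-n) ... Q_(-1))^(-1)) the map Y(f) = M(f) R_(f_k)
   obeys the same commutation relations as M, while Y(e_k) = M(e_k) + M(e_k + h) and
   Y(e_j) = M(e_j) for j <> k.  So M(f) |-> Y(f) defines a ring map phi on the quantum torus.
   Grading the torus by the k-th exponent, phi multiplies the component of degree m >= 0 by the
   nonzero degree-zero element R_(-m)^(-1); hence phi is injective, and as F is the skew field
   of right fractions of the torus, phi extends to an endomorphism of F.  Its image contains the
   scalars and all M(e_j), so it is onto; and any automorphism is determined by its values on
   the M(e_j), which generate F as a skew field. *)

section \<open>Ring homomorphisms and right fractions\<close>

definition unital_ring_hom :: "('a::ring_1 \<Rightarrow> 'b::ring_1) \<Rightarrow> bool" where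
  "unital_ring_hom \<sigma> \<longleftrightarrow> \<sigma> 1 = 1 \<and> (\<forall>x y. \<sigma> (x + y) = \<sigma> x + \<sigma> y) \<and> (\<forall>x y. \<sigma> (x * y) = \<sigma> x * \<sigma> y)"

lemma unital_ring_homD:
  assumes "unital_ring_hom \<sigma>"
  shows "\<sigma> 1 = 1" "\<sigma> (x + y) = \<sigma> x + \<sigma> y" "\<sigma> (x * y) = \<sigma> x * \<sigma> y" "\<sigma> 0 = 0"
proof -
  show "\<sigma> 1 = 1" "\<sigma> (x + y) = \<sigma> x + \<sigma> y" "\<sigma> (x * y) = \<sigma> x * \<sigma> y" for x y
    using assms unfolding unital_ring_hom_def by blast+
  then show "\<sigma> 0 = 0"
    by (metis add_cancel_right_right add_0)
qed

lemma unital_ring_hom_inverse: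
  fixes \<sigma> :: "'a::division_ring \<Rightarrow> 'b::division_ring"
  assumes "unital_ring_hom \<sigma>"
  shows "\<sigma> (inverse x) = inverse (\<sigma> x)"
proof (cases "x = 0")
  case False
  then have "\<sigma> x * \<sigma> (inverse x) = 1"
    by (metis assms right_inverse unital_ring_homD(1,3))
  then show ?thesis by (rule inverse_unique[symmetric])
qed (simp add: unital_ring_homD(4)[OF assms])

lemma unital_ring_hom_range:
  fixes \<sigma> :: "'a::division_ring \<Rightarrow> 'b::division_ring"
  assumes "unital_ring_hom \<sigma>"
  shows "0 \<in> range \<sigma>"
    and "x \<in> range \<sigma> \<Longrightarrow> y \<in> range \<sigma> \<Longrightarrow> x + y \<in> range \<sigma>"
    and "x \<in> range \<sigma> \<Longrightarrow> y \<in> range \<sigma> \<Longrightarrow> x * y \<in> range \<sigma>"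
    and "x \<in> range \<sigma> \<Longrightarrow> inverse x \<in> range \<sigma>"
  using unital_ring_homD[OF assms] unital_ring_hom_inverse[OF assms]
  by (auto intro: range_eqI[of _ _ 0] range_eqI[of _ _ "_ + _"] range_eqI[of _ _ "_ * _"]
      range_eqI[of _ _ "inverse _"])

lemma unital_ring_hom_inj:
  fixes \<sigma> :: "'a::division_ring \<Rightarrow> 'b::division_ring"
  assumes "unital_ring_hom \<sigma>"
  shows "inj \<sigma>"
proof (rule injI)
  fix x y assume "\<sigma> x = \<sigma> y"
  then have "\<sigma> (x - y) = 0"
    using unital_ring_homD(2)[OF assms, of "x - y" y] by simp
  then have "\<sigma> ((x - y) * inverse (x - y)) = 0"
    by (simp add: unital_ring_homD(3)[OF assms])
  then show "x = y"
    using unital_ring_homD(1)[OF assms] by (cases "x = y") auto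
qed

lemma inverse_cancel:
  fixes a b :: "'a::division_ring"
  assumes "a \<noteq> 0"
  shows "inverse a * (a * b) = b" "a * (inverse a * b) = b"
    and "b * a * inverse a = b" "b * inverse a * a = b"
  using assms by (simp_all add: mult.assoc[symmetric]) (simp_all add: mult.assoc)

lemma nonzero_quotient_cancel_right:
  fixes x y w :: "'a::division_ring"
  assumes "y \<noteq> 0" "w \<noteq> 0"
  shows "(x * w) * inverse (y * w) = x * inverse y"
  using assms by (simp add: nonzero_inverse_mult_distrib mult.assoc[symmetric])
    (simp add: mult.assoc)

lemma mult_commute_prod_list:
  fixes y :: "'a::monoid_mult"
  assumes "\<And>q. q \<in> set qs \<Longrightarrow> y * q = q * y"
  shows "y * prod_list qs = prod_list qs * y"
  using assms by (induction qs) (simp_all, metis mult.assoc)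

locale right_fractions =
  fixes T :: "'a::division_ring set"
  assumes one_mem: "1 \<in> T"
    and add_mem: "x \<in> T \<Longrightarrow> y \<in> T \<Longrightarrow> x + y \<in> T"
    and mult_mem: "x \<in> T \<Longrightarrow> y \<in> T \<Longrightarrow> x * y \<in> T"
    and fraction: "\<exists>a\<in>T. \<exists>b\<in>T. b \<noteq> 0 \<and> x = a * inverse b"
begin

lemma ore_condition:
  assumes "b \<in> T" "b' \<in> T" "b \<noteq> 0" "b' \<noteq> 0"
  obtains u u' where "u \<in> T" "u' \<in> T" "u \<noteq> 0" "u' \<noteq> 0" "b * u = b' * u'"
proof -
  obtain u u' where u: "u \<in> T" "u' \<in> T" "u' \<noteq> 0" "inverse b * b' = u * inverse u'"
    using fraction[of "inverse b * b'"] by blast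
  have "b * u = b * (u * inverse u') * u'"
    using u(3) by (simp add: mult.assoc)
  also have "\<dots> = b' * u'"
    using assms(3) by (simp flip: u(4) add: mult.assoc[symmetric])
  finally have "b * u = b' * u'" .
  moreover from this have "u \<noteq> 0" using assms(4) u(3) by auto
  ultimately show thesis using that u by blast
qed

lemma unital_ring_hom_eqI:
  fixes \<sigma>\<^sub>1 \<sigma>\<^sub>2 :: "'a \<Rightarrow> 'b::division_ring"
  assumes "unital_ring_hom \<sigma>\<^sub>1" "unital_ring_hom \<sigma>\<^sub>2" "\<And>t. t \<in> T \<Longrightarrow> \<sigma>\<^sub>1 t = \<sigma>\<^sub>2 t"
  shows "\<sigma>\<^sub>1 = \<sigma>\<^sub>2"
proof
  fix x
  obtain a b where "a \<in> T" "b \<in> T" "x = a * inverse b"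
    using fraction by blast
  then show "\<sigma>\<^sub>1 x = \<sigma>\<^sub>2 x"
    using assms(3) unital_ring_homD(3)[OF assms(1)] unital_ring_homD(3)[OF assms(2)]
      unital_ring_hom_inverse[OF assms(1)] unital_ring_hom_inverse[OF assms(2)] by simp
qed

lemma closed_superset_eq_UNIV:
  assumes "T \<subseteq> S" "\<And>x y. x \<in> S \<Longrightarrow> y \<in> S \<Longrightarrow> x * y \<in> S" "\<And>x. x \<in> S \<Longrightarrow> inverse x \<in> S"
  shows "S = UNIV"
proof -
  have "x \<in> S" for x
  proof -
    obtain a b where "a \<in> T" "b \<in> T" "x = a * inverse b"
      using fraction by blast
    then show ?thesis
      using assms by blast
  qed
  then show ?thesis by blast
qed

end

locale fraction_hom = right_fractions T for T :: "'a::division_ring set" +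
  fixes \<phi> :: "'a \<Rightarrow> 'b::division_ring"
  assumes hom_one: "\<phi> 1 = 1"
    and hom_add: "x \<in> T \<Longrightarrow> y \<in> T \<Longrightarrow> \<phi> (x + y) = \<phi> x + \<phi> y"
    and hom_mult: "x \<in> T \<Longrightarrow> y \<in> T \<Longrightarrow> \<phi> (x * y) = \<phi> x * \<phi> y"
    and hom_nonzero: "x \<in> T \<Longrightarrow> x \<noteq> 0 \<Longrightarrow> \<phi> x \<noteq> 0"
begin

definition extend :: "'a \<Rightarrow> 'b" where
  "extend x = (SOME y. \<exists>a\<in>T. \<exists>b\<in>T. b \<noteq> 0 \<and> x = a * inverse b \<and> y = \<phi> a * inverse (\<phi> b))"

lemma quotient_well_defined:
  assumes "a \<in> T" "b \<in> T" "a' \<in> T" "b' \<in> T" "b \<noteq> 0" "b' \<noteq> 0"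
    and "a * inverse b = a' * inverse b'"
  shows "\<phi> a * inverse (\<phi> b) = \<phi> a' * inverse (\<phi> b')"
proof -
  obtain u u' where u: "u \<in> T" "u' \<in> T" "u \<noteq> 0" "u' \<noteq> 0" "b * u = b' * u'"
    using ore_condition[of b b'] assms by blast
  have "a * u = a * inverse b * (b * u)"
    using assms(5) by (simp add: mult.assoc inverse_cancel)
  also have "\<dots> = a' * u'"
    using assms(6) by (simp add: assms(7) u(5) mult.assoc inverse_cancel)
  finally have a_u: "\<phi> a * \<phi> u = \<phi> a' * \<phi> u'"
    using assms u by (simp flip: hom_mult)
  have b_u: "\<phi> b * \<phi> u = \<phi> b' * \<phi> u'"
    using assms u by (simp flip: hom_mult)
  have nonzero: "\<phi> b \<noteq> 0" "\<phi> b' \<noteq> 0" "\<phi> u \<noteq> 0" "\<phi> u' \<noteq> 0"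
    using assms u hom_nonzero by auto
  have "\<phi> a * inverse (\<phi> b) = (\<phi> a * \<phi> u) * inverse (\<phi> b * \<phi> u)"
    using nonzero by (simp add: nonzero_quotient_cancel_right)
  also have "\<dots> = \<phi> a' * inverse (\<phi> b')"
    using nonzero by (simp add: a_u b_u nonzero_quotient_cancel_right)
  finally show ?thesis .
qed

lemma extend_quotient:
  assumes "a \<in> T" "b \<in> T" "b \<noteq> 0"
  shows "extend (a * inverse b) = \<phi> a * inverse (\<phi> b)"
proof -
  let ?P = "\<lambda>y. \<exists>a'\<in>T. \<exists>b'\<in>T. b' \<noteq> 0 \<and> a * inverse b = a' * inverse b' \<and> y = \<phi> a' * inverse (\<phi> b')"
  have "?P (\<phi> a * inverse (\<phi> b))"
    using assms by blast
  then have "?P (extend (a * inverse b))"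
    unfolding extend_def by (rule someI)
  then show ?thesis
    using quotient_well_defined assms by metis
qed

lemma extend_on: "t \<in> T \<Longrightarrow> extend t = \<phi> t"
  using extend_quotient[of t 1] one_mem by (simp add: hom_one)

lemma extend_add: "extend (x + y) = extend x + extend y"
proof -
  obtain a b where ab: "a \<in> T" "b \<in> T" "b \<noteq> 0" "x = a * inverse b"
    using fraction by blast
  obtain a' b' where ab': "a' \<in> T" "b' \<in> T" "b' \<noteq> 0" "y = a' * inverse b'"
    using fraction by blast
  obtain u u' where u: "u \<in> T" "u' \<in> T" "u \<noteq> 0" "u' \<noteq> 0" "b * u = b' * u'"
    using ore_condition ab ab' by metis
  define d where "d = b * u"
  have d: "d \<in> T" "d \<noteq> 0"
    using ab(2,3) u(1,3) by (simp_all add: d_def mult_mem)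
  have x: "x = (a * u) * inverse d"
    using ab(3,4) u(3) by (simp add: d_def nonzero_quotient_cancel_right)
  have y: "y = (a' * u') * inverse d"
    using ab'(3,4) u(4) by (simp add: d_def u(5) nonzero_quotient_cancel_right)
  have au: "a * u \<in> T" "a' * u' \<in> T"
    using ab ab' u by (simp_all add: mult_mem)
  have "extend (x + y) = extend ((a * u + a' * u') * inverse d)"
    by (simp add: x y distrib_right)
  also have "\<dots> = \<phi> (a * u + a' * u') * inverse (\<phi> d)"
    using au d by (simp add: extend_quotient add_mem)
  also have "\<dots> = \<phi> (a * u) * inverse (\<phi> d) + \<phi> (a' * u') * inverse (\<phi> d)"
    using au by (simp add: hom_add distrib_right)
  also have "\<dots> = extend x + extend y"
    using au d by (simp add: x y extend_quotient)
  finally show ?thesis .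
qed

lemma extend_mult: "extend (x * y) = extend x * extend y"
proof -
  obtain a b where ab: "a \<in> T" "b \<in> T" "b \<noteq> 0" "x = a * inverse b"
    using fraction by blast
  obtain a' b' where ab': "a' \<in> T" "b' \<in> T" "b' \<noteq> 0" "y = a' * inverse b'"
    using fraction by blast
  obtain v w where vw: "v \<in> T" "w \<in> T" "w \<noteq> 0" "inverse b * a' = v * inverse w"
    using fraction by blast
  have "a' * w = b * (inverse b * a') * w"
    using ab(3) by (simp add: mult.assoc[symmetric])
  also have "\<dots> = b * v"
    using vw by (simp add: mult.assoc)
  finally have "\<phi> a' * \<phi> w = \<phi> b * \<phi> v"
    using ab ab' vw by (simp flip: hom_mult)
  then have swap: "inverse (\<phi> b) * \<phi> a' = \<phi> v * inverse (\<phi> w)"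
    using ab(2,3) vw(2,3) hom_nonzero
    by (metis inverse_cancel(1,3) mult.assoc)
  have "x * y = a * (inverse b * a') * inverse b'"
    using ab(4) ab'(4) by (simp only: mult.assoc)
  also have "\<dots> = (a * v) * inverse (b' * w)"
    using ab'(3) vw(3,4) by (simp add: mult.assoc nonzero_inverse_mult_distrib)
  finally have "extend (x * y) = extend ((a * v) * inverse (b' * w))"
    by simp
  also have "\<dots> = \<phi> (a * v) * inverse (\<phi> (b' * w))"
    using ab'(3) vw(3) by (intro extend_quotient) (simp_all add: ab ab' vw mult_mem)
  also have "\<dots> = \<phi> a * \<phi> v * (inverse (\<phi> w) * inverse (\<phi> b'))"
    using ab ab' vw hom_nonzero by (simp add: hom_mult nonzero_inverse_mult_distrib)
  also have "\<dots> = \<phi> a * (inverse (\<phi> b) * \<phi> a') * inverse (\<phi> b')"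
    by (simp add: swap mult.assoc)
  also have "\<dots> = extend x * extend y"
    using ab ab' by (simp add: extend_quotient mult.assoc)
  finally show ?thesis .
qed

lemma unital_ring_hom_extend: "unital_ring_hom extend"
  unfolding unital_ring_hom_def
  using extend_on[OF one_mem] by (simp add: hom_one extend_add extend_mult)

end

section \<open>The coefficient rings\<close>

lemma map_poly_of_int_add:
  "map_poly of_int (p + q) = map_poly of_int p + (map_poly of_int q :: 'a::comm_ring_1 poly)"
  by (intro poly_eqI) (simp add: coeff_map_poly)

lemma map_poly_of_int_mult:
  "map_poly of_int (p * q) = map_poly of_int p * (map_poly of_int q :: 'a::comm_ring_1 poly)"
  by (intro poly_eqI) (simp add: coeff_map_poly coeff_mult)

lemma map_poly_of_int_uminus:
  "map_poly of_int (- p) = - (map_poly of_int p :: 'a::comm_ring_1 poly)"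
  by (intro poly_eqI) (simp add: coeff_map_poly)

lemma Zring_add: "a \<in> Zring z \<Longrightarrow> b \<in> Zring z \<Longrightarrow> a + b \<in> Zring z"
  unfolding Zring_def by (auto simp flip: poly_add map_poly_of_int_add)

lemma Zring_mult: "a \<in> Zring z \<Longrightarrow> b \<in> Zring z \<Longrightarrow> a * b \<in> Zring z"
  unfolding Zring_def by (auto simp flip: poly_mult map_poly_of_int_mult)

lemma Zring_uminus: "a \<in> Zring z \<Longrightarrow> - a \<in> Zring z"
  unfolding Zring_def by (auto simp flip: poly_minus map_poly_of_int_uminus)

lemma Zring_of_int [simp]: "of_int n \<in> Zring z"
  unfolding Zring_def by (auto intro!: exI[of _ "[:n:]"] simp: map_poly_pCons)

lemma Zring_0 [simp]: "0 \<in> Zring z" and Zring_1 [simp]: "1 \<in> Zring z"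
  using Zring_of_int[of 0 z] Zring_of_int[of 1 z] by simp_all

lemma Zring_power: "z ^ n \<in> Zring z"
proof -
  have "z \<in> Zring z"
    unfolding Zring_def by (auto intro!: exI[of _ "[:0, 1:]"] simp: map_poly_pCons)
  then show ?thesis
    by (induction n) (simp_all add: Zring_mult)
qed

lemma Zring_subset_Qfield: "Zring z \<subseteq> Qfield z"
proof
  fix a assume "a \<in> Zring z"
  then obtain p where "a = poly (map_poly of_int p) z"
    unfolding Zring_def by blast
  then show "a \<in> Qfield z"
    unfolding Qfield_def
    by (intro CollectI exI[of _ "map_poly of_int p"] exI[of _ 1])
      (simp add: map_poly_map_poly o_def)
qed

lemma rat_poly_common_denominator:
  fixes p :: "rat poly"
  shows "\<exists>d::int. d > 0 \<and> (\<exists>P. smult (of_int d) p = map_poly of_int P)"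
proof (induction p)
  case 0
  show ?case by (intro exI[of _ 1] conjI exI[of _ 0]) simp_all
next
  case (pCons c p)
  then obtain d P where "d > 0" and P: "smult (of_int d) p = map_poly of_int P"
    by blast
  obtain u v where "quotient_of c = (u, v)"
    by (cases "quotient_of c")
  then have "v > 0" and c: "c = of_int u / of_int v"
    by (simp_all add: quotient_of_denom_pos quotient_of_div)
  have "smult (of_int (d * v)) (pCons c p) = map_poly of_int (pCons (d * u) (smult v P))"
    using \<open>v > 0\<close> by (simp add: c P[symmetric] map_poly_pCons map_poly_smult mult.commute)
  then show ?case
    using \<open>d > 0\<close> \<open>v > 0\<close> by (intro exI[of _ "d * v"]) auto
qed

lemma Qfield_ratio_Zring:
  assumes "c \<in> Qfield z"
  obtains A B where "A \<in> Zring z" "B \<in> Zring z" "B \<noteq> 0" "c * B = A"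
proof -
  have clear: "\<exists>d::int. d > 0 \<and> of_int d * poly (map_poly of_rat p) z \<in> Zring z" for p
  proof -
    obtain d P where "d > 0" "smult (of_int d) p = map_poly of_int P"
      using rat_poly_common_denominator by blast
    have "smult (of_int d) (map_poly of_rat p) = map_poly of_rat (smult (of_int d) p)"
      by (simp add: map_poly_smult of_rat_mult)
    also have "\<dots> = (map_poly of_int P :: complex poly)"
      by (simp add: \<open>smult (of_int d) p = map_poly of_int P\<close> map_poly_map_poly o_def)
    finally have "of_int d * poly (map_poly of_rat p) z = poly (map_poly of_int P) z"
      by (metis poly_smult)
    then show ?thesis
      using \<open>d > 0\<close> unfolding Zring_def by auto
  qed
  obtain p q where q: "poly (map_poly of_rat q) z \<noteq> 0"
    and c: "c = poly (map_poly of_rat p) z / poly (map_poly of_rat q) z"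
    using assms unfolding Qfield_def by blast
  obtain n where n: "n > 0" "of_int n * poly (map_poly of_rat p) z \<in> Zring z"
    using clear by blast
  obtain m where m: "m > 0" "of_int m * poly (map_poly of_rat q) z \<in> Zring z"
    using clear by blast
  show thesis
  proof
    show "of_int m * (of_int n * poly (map_poly of_rat p) z) \<in> Zring z"
      using n by (simp add: Zring_mult)
    show "of_int n * (of_int m * poly (map_poly of_rat q) z) \<in> Zring z"
      using m by (simp add: Zring_mult)
    show "of_int n * (of_int m * poly (map_poly of_rat q) z) \<noteq> 0"
      using n m q by simp
    show "c * (of_int n * (of_int m * poly (map_poly of_rat q) z))
        = of_int m * (of_int n * poly (map_poly of_rat p) z)"
      using q by (simp add: c)
  qed
qed

section \<open>Toric frames and the quantum torus\<close>

lemma sum_fun_apply: "(\<Sum>j\<in>A. F j) i = (\<Sum>j\<in>A. F j i)"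
  by (induction A rule: infinite_finite_induct) auto

lemma ebasis_expansion: "(f :: 'n::finite \<Rightarrow> int) = (\<Sum>j\<in>UNIV. (\<lambda>i. f j * ebasis j i))"
proof
  fix i
  have "f j * ebasis j i = (if i = j then f j else 0)" for j
    by (simp add: ebasis_def)
  then have "(\<Sum>j\<in>UNIV. (\<lambda>i. f j * ebasis j i)) i = (\<Sum>j\<in>UNIV. if i = j then f j else 0)"
    by (simp add: sum_fun_apply)
  then show "f i = (\<Sum>j\<in>UNIV. (\<lambda>i. f j * ebasis j i)) i"
    by simp
qed

lemma ebasis_generates:
  fixes G :: "('n::finite \<Rightarrow> int) set"
  assumes zero: "0 \<in> G" and add: "\<And>f g. f \<in> G \<Longrightarrow> g \<in> G \<Longrightarrow> f + g \<in> G"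
    and uminus: "\<And>f. f \<in> G \<Longrightarrow> - f \<in> G" and basis: "\<And>j. ebasis j \<in> G"
  shows "f \<in> G"
proof -
  have multiple: "(\<lambda>i. n * ebasis j i) \<in> G" for n j
  proof (induction n rule: int_induct[where k = 0])
    case base
    show ?case using zero by (simp add: zero_fun_def)
  next
    case (step1 n)
    have "(\<lambda>i. (n + 1) * ebasis j i) = (\<lambda>i. n * ebasis j i) + ebasis j"
      by (simp add: fun_eq_iff algebra_simps)
    then show ?case using add[OF step1(2) basis] by simp
  next
    case (step2 n)
    have "(\<lambda>i. (n - 1) * ebasis j i) = (\<lambda>i. n * ebasis j i) + - ebasis j"
      by (simp add: fun_eq_iff algebra_simps)
    then show ?case using add[OF step2(2) uminus[OF basis]] by simp
  qed
  have "(\<Sum>j\<in>A. (\<lambda>i. f j * ebasis j i)) \<in> G" if "finite A" for A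
    using that
  proof (induction A rule: finite_induct)
    case empty
    show ?case using zero by (simp only: sum.empty)
  next
    case (insert j A)
    then show ?case by (simp only: sum.insert[OF insert(1,2)]) (rule add[OF multiple])
  qed
  then show ?thesis
    by (subst ebasis_expansion) simp
qed

lemma K_alg_automorphism_unital_ring_hom: "K_alg_automorphism z \<iota> \<sigma> \<Longrightarrow> unital_ring_hom \<sigma>"
  by (simp add: K_alg_automorphism_def unital_ring_hom_def)

lemma K_alg_automorphism_fixes_scalars:
  assumes "K_alg_automorphism z \<iota> \<sigma>" "c \<in> Qfield z"
  shows "\<sigma> (\<iota> c) = \<iota> c"
  using assms unfolding K_alg_automorphism_def by (metis mult.right_neutral)

(* A formal finite sum  sum c_f X^f  in the quantum torus, as a list of pairs (c_f, f);
   an exponent may occur several times. *)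
type_synonym 'n terms = "(complex \<times> ('n \<Rightarrow> int)) list"

locale root_frame =
  fixes l :: nat and z :: complex and \<iota> :: "complex \<Rightarrow> 'a::division_ring"
    and M :: "('n::finite \<Rightarrow> int) \<Rightarrow> 'a" and \<Lambda> :: "('n \<Rightarrow> int) \<Rightarrow> ('n \<Rightarrow> int) \<Rightarrow> int"
  assumes l_pos: "0 < l"
    and primitive: "primitive_root_of_unity l z"
    and K_alg: "K_algebra z \<iota>"
    and frame: "toric_frame l z \<iota> M \<Lambda>"
begin

lemma z_nonzero: "z \<noteq> 0"
  using primitive l_pos unfolding primitive_root_of_unity_def by (auto simp: zero_power)

lemma powi_cong:
  assumes "[m = n] (mod int l)"
  shows "z powi m = z powi n"
proof -
  obtain t where n: "n = m + int l * t"
    using assms cong_iff_lin by blast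
  have "z powi (int l * t) = (z ^ l) powi t"
    by (simp add: power_int_mult power_int_of_nat)
  then have "z powi (int l * t) = 1"
    using primitive unfolding primitive_root_of_unity_def by simp
  then show ?thesis
    using z_nonzero by (simp add: n power_int_add)
qed

lemma Zring_powi: "z powi n \<in> Zring z"
proof -
  have "z powi n = z powi (n mod int l)"
    by (rule powi_cong) (simp add: cong_def)
  also have "\<dots> = z ^ nat (n mod int l)"
    using l_pos by (simp add: power_int_def)
  finally show ?thesis
    by (simp add: Zring_power)
qed

lemma \<iota>_one [simp]: "\<iota> 1 = 1"
  using K_alg unfolding K_algebra_def by blast

lemma \<iota>_add: "a \<in> Zring z \<Longrightarrow> b \<in> Zring z \<Longrightarrow> \<iota> (a + b) = \<iota> a + \<iota> b"
  using K_alg Zring_subset_Qfield unfolding K_algebra_def by blast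

lemma \<iota>_mult: "a \<in> Qfield z \<Longrightarrow> b \<in> Qfield z \<Longrightarrow> \<iota> (a * b) = \<iota> a * \<iota> b"
  using K_alg unfolding K_algebra_def by blast

lemma \<iota>_central: "a \<in> Qfield z \<Longrightarrow> \<iota> a * x = x * \<iota> a"
  using K_alg unfolding K_algebra_def by blast

lemma \<iota>_zero [simp]: "\<iota> 0 = 0"
  using \<iota>_add[of 0 0] by simp

lemma \<iota>_uminus: "a \<in> Zring z \<Longrightarrow> \<iota> (- a) = - \<iota> a"
  using \<iota>_add[of a "- a"] Zring_uminus[of a z] by (simp add: minus_unique)

lemma \<iota>_powi_add: "\<iota> (z powi (m + n)) = \<iota> (z powi m) * \<iota> (z powi n)"
  using z_nonzero Zring_powi Zring_subset_Qfield by (simp add: power_int_add \<iota>_mult subset_iff)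

lemma \<iota>_powi_uminus: "\<iota> (z powi (- n)) * \<iota> (z powi n) = 1"
  using \<iota>_powi_add[of "- n" n] by simp

lemma \<iota>_powi_central: "\<iota> (z powi n) * x = x * \<iota> (z powi n)"
  using Zring_powi Zring_subset_Qfield by (blast intro: \<iota>_central)

lemma M_zero [simp]: "M 0 = 1"
  using frame unfolding toric_frame_def by blast

lemma M_mult: "M f * M g = \<iota> (z powi \<Lambda> f g) * M (f + g)"
  using frame unfolding toric_frame_def by blast

lemma M_independent:
  "finite S \<Longrightarrow> (\<And>f. f \<in> S \<Longrightarrow> c f \<in> Zring z) \<Longrightarrow> (\<Sum>f\<in>S. \<iota> (c f) * M f) = 0 \<Longrightarrow> f \<in> S \<Longrightarrow> c f = 0"
  using frame unfolding toric_frame_def by blast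

lemma right_fraction_of_torus_image:
  "\<exists>a\<in>torus_image z \<iota> M. \<exists>b\<in>torus_image z \<iota> M. b \<noteq> 0 \<and> x = a * inverse b"
  using frame unfolding toric_frame_def by blast

lemma \<iota>_nonzero: "a \<in> Zring z \<Longrightarrow> a \<noteq> 0 \<Longrightarrow> \<iota> a \<noteq> 0"
  using M_independent[of "{0}" "\<lambda>_. a"] by auto

lemma M_nonzero: "M f \<noteq> 0"
  using M_independent[of "{f}" "\<lambda>_. 1"] by auto

lemma M_add: "M (f + g) = \<iota> (z powi (- \<Lambda> f g)) * M f * M g"
  by (simp add: M_mult mult.assoc flip: mult.assoc[of _ "\<iota> _"] add: \<iota>_powi_uminus)

lemma M_uminus: "M (- f) = inverse (M f) * \<iota> (z powi \<Lambda> f (- f))"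
proof -
  have "M (- f) = inverse (M f) * (M f * M (- f))"
    by (simp add: inverse_cancel(1) M_nonzero)
  then show ?thesis
    by (simp add: M_mult)
qed

lemma \<Lambda>_add_right: "[\<Lambda> f (g + h) = \<Lambda> f g + \<Lambda> f h] (mod int l)"
  and \<Lambda>_skew: "[\<Lambda> f g = - \<Lambda> g f] (mod int l)"
  using frame unfolding toric_frame_def skew_bilinear_mod_def by simp_all

lemma \<Lambda>_zero_right: "[\<Lambda> f 0 = 0] (mod int l)"
proof -
  have "[0 + \<Lambda> f 0 = \<Lambda> f 0 + \<Lambda> f 0] (mod int l)"
    using \<Lambda>_add_right[of f 0 0] by simp
  then show ?thesis
    by (simp only: cong_add_rcancel cong_sym)
qed

lemma \<Lambda>_smult_right: "[\<Lambda> f (\<lambda>i. n * v i) = n * \<Lambda> f v] (mod int l)"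
proof (induction n rule: int_induct[where k = 0])
  case base
  show ?case using \<Lambda>_zero_right by (simp add: zero_fun_def)
next
  case (step1 n)
  have "(\<lambda>i. (n + 1) * v i) = (\<lambda>i. n * v i) + v"
    by (simp add: fun_eq_iff algebra_simps)
  then have "[\<Lambda> f (\<lambda>i. (n + 1) * v i) = \<Lambda> f (\<lambda>i. n * v i) + \<Lambda> f v] (mod int l)"
    using \<Lambda>_add_right by simp
  also have "[\<Lambda> f (\<lambda>i. n * v i) + \<Lambda> f v = (n + 1) * \<Lambda> f v] (mod int l)"
    using step1(2) by (simp add: cong_add_rcancel distrib_right)
  finally show ?case .
next
  case (step2 n)
  have "(\<lambda>i. n * v i) = (\<lambda>i. (n - 1) * v i) + v"
    by (simp add: fun_eq_iff algebra_simps)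
  then have "[\<Lambda> f (\<lambda>i. (n - 1) * v i) + \<Lambda> f v = \<Lambda> f (\<lambda>i. n * v i)] (mod int l)"
    using \<Lambda>_add_right[of f "\<lambda>i. (n - 1) * v i" v] by (simp add: cong_sym)
  also have "[\<Lambda> f (\<lambda>i. n * v i) = n * \<Lambda> f v] (mod int l)"
    by (rule step2(2))
  finally have "[\<Lambda> f (\<lambda>i. (n - 1) * v i) + \<Lambda> f v = (n - 1) * \<Lambda> f v + \<Lambda> f v] (mod int l)"
    by (simp add: algebra_simps)
  then show ?case
    by (simp add: cong_add_rcancel)
qed

lemma \<Lambda>_smult_left: "[\<Lambda> (\<lambda>i. n * v i) f = n * \<Lambda> v f] (mod int l)"
proof -
  have "[\<Lambda> (\<lambda>i. n * v i) f = - \<Lambda> f (\<lambda>i. n * v i)] (mod int l)"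
    by (rule \<Lambda>_skew)
  also have "[- \<Lambda> f (\<lambda>i. n * v i) = - (n * \<Lambda> f v)] (mod int l)"
    using \<Lambda>_smult_right by (simp add: cong_minus_minus_iff)
  also have "[- (n * \<Lambda> f v) = n * \<Lambda> v f] (mod int l)"
    using cong_scalar_left[OF \<Lambda>_skew[of f v], of "- n"] by simp
  finally show ?thesis .
qed

lemma \<Lambda>_expand_right: "[\<Lambda> f v = (\<Sum>j\<in>UNIV. v j * \<Lambda> f (ebasis j))] (mod int l)"
proof -
  have "[\<Lambda> f (\<Sum>j\<in>A. (\<lambda>i. v j * ebasis j i)) = (\<Sum>j\<in>A. v j * \<Lambda> f (ebasis j))] (mod int l)"
    if "finite A" for A
    using that
  proof (induction A rule: finite_induct)
    case empty
    show ?case using \<Lambda>_zero_right by (simp add: zero_fun_def)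
  next
    case (insert j A)
    have "[\<Lambda> f ((\<lambda>i. v j * ebasis j i) + (\<Sum>j\<in>A. (\<lambda>i. v j * ebasis j i)))
        = \<Lambda> f (\<lambda>i. v j * ebasis j i) + \<Lambda> f (\<Sum>j\<in>A. (\<lambda>i. v j * ebasis j i))] (mod int l)"
      by (rule \<Lambda>_add_right)
    also have "[\<Lambda> f (\<lambda>i. v j * ebasis j i) + \<Lambda> f (\<Sum>j\<in>A. (\<lambda>i. v j * ebasis j i))
        = v j * \<Lambda> f (ebasis j) + (\<Sum>j\<in>A. v j * \<Lambda> f (ebasis j))] (mod int l)"
      using \<Lambda>_smult_right insert.IH by (rule cong_add)
    finally show ?case
      by (simp only: sum.insert[OF insert(1,2)])
  qed
  from this[of UNIV] show ?thesis
    by (simp only: finite ebasis_expansion[of v, symmetric])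
qed

definition Zring_terms :: "'n terms \<Rightarrow> bool" where
  "Zring_terms xs \<longleftrightarrow> fst ` set xs \<subseteq> Zring z"

definition eval_terms :: "(('n \<Rightarrow> int) \<Rightarrow> 'a) \<Rightarrow> 'n terms \<Rightarrow> 'a" where
  "eval_terms W xs = (\<Sum>p\<leftarrow>xs. \<iota> (fst p) * W (snd p))"

definition term_coeff :: "'n terms \<Rightarrow> ('n \<Rightarrow> int) \<Rightarrow> complex" where
  "term_coeff xs f = (\<Sum>p\<leftarrow>filter (\<lambda>p. snd p = f) xs. fst p)"

definition terms_mult :: "'n terms \<Rightarrow> 'n terms \<Rightarrow> 'n terms" where
  "terms_mult xs ys =
     concat (map (\<lambda>p. map (\<lambda>q. (fst p * fst q * z powi \<Lambda> (snd p) (snd q), snd p + snd q)) ys) xs)"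

definition twisted_mult :: "(('n \<Rightarrow> int) \<Rightarrow> 'a) \<Rightarrow> bool" where
  "twisted_mult W \<longleftrightarrow> (\<forall>f g. W f * W g = \<iota> (z powi \<Lambda> f g) * W (f + g))"

lemma Zring_terms_simps [simp]:
  "Zring_terms []" "Zring_terms (p # xs) \<longleftrightarrow> fst p \<in> Zring z \<and> Zring_terms xs"
  "Zring_terms (xs @ ys) \<longleftrightarrow> Zring_terms xs \<and> Zring_terms ys"
  by (auto simp: Zring_terms_def)

lemma eval_terms_simps [simp]:
  "eval_terms W [] = 0" "eval_terms W (p # xs) = \<iota> (fst p) * W (snd p) + eval_terms W xs"
  "eval_terms W (xs @ ys) = eval_terms W xs + eval_terms W ys"
  by (simp_all add: eval_terms_def)

lemma term_coeff_simps [simp]: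
  "term_coeff [] f = 0" "term_coeff (p # xs) f = (if snd p = f then fst p else 0) + term_coeff xs f"
  "term_coeff (xs @ ys) f = term_coeff xs f + term_coeff ys f"
  by (simp_all add: term_coeff_def)

lemma term_coeff_Zring: "Zring_terms xs \<Longrightarrow> term_coeff xs f \<in> Zring z"
  by (induction xs) (simp_all add: Zring_add)

lemma term_coeff_notin: "f \<notin> snd ` set xs \<Longrightarrow> term_coeff xs f = 0"
  by (induction xs) auto

lemma eval_terms_cong:
  "(\<And>p. p \<in> set xs \<Longrightarrow> W (snd p) = W' (snd p)) \<Longrightarrow> eval_terms W xs = eval_terms W' xs"
  by (induction xs) auto

lemma eval_terms_by_coeff:
  assumes "Zring_terms xs" "finite S" "snd ` set xs \<subseteq> S"
  shows "eval_terms W xs = (\<Sum>f\<in>S. \<iota> (term_coeff xs f) * W f)"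
  using assms(1,3)
proof (induction xs)
  case (Cons p xs)
  have "\<iota> (term_coeff (p # xs) f) * W f
      = (if f = snd p then \<iota> (fst p) * W f else 0) + \<iota> (term_coeff xs f) * W f" for f
    using Cons.prems by (simp add: \<iota>_add term_coeff_Zring distrib_right)
  then have "(\<Sum>f\<in>S. \<iota> (term_coeff (p # xs) f) * W f)
      = \<iota> (fst p) * W (snd p) + (\<Sum>f\<in>S. \<iota> (term_coeff xs f) * W f)"
    using Cons.prems assms(2) by (simp add: sum.distrib)
  then show ?case
    using Cons by simp
qed simp

lemma term_coeff_eq_zero:
  assumes "Zring_terms xs" "eval_terms M xs = 0"
  shows "term_coeff xs f = 0"
proof -
  let ?S = "insert f (snd ` set xs)"
  have "(\<Sum>f\<in>?S. \<iota> (term_coeff xs f) * M f) = 0"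
    using assms eval_terms_by_coeff[of xs ?S M] by auto
  then show ?thesis
    by (rule M_independent[of ?S "term_coeff xs", rotated 2])
      (simp_all add: term_coeff_Zring assms(1))
qed

lemma eval_terms_eq_zero: "Zring_terms xs \<Longrightarrow> (\<And>f. term_coeff xs f = 0) \<Longrightarrow> eval_terms W xs = 0"
  using eval_terms_by_coeff[of xs "snd ` set xs" W] by simp

lemma term_coeff_unique:
  assumes "Zring_terms xs" "Zring_terms ys" "eval_terms M xs = eval_terms M ys"
  shows "term_coeff xs = term_coeff ys"
proof
  fix f
  let ?neg = "map (\<lambda>p. (- fst p, snd p))"
  have "Zring_terms (?neg ys) \<and> eval_terms M (?neg ys) = - eval_terms M ys
      \<and> term_coeff (?neg ys) f = - term_coeff ys f"
    using assms(2) by (induction ys) (simp_all add: Zring_uminus \<iota>_uminus)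
  then show "term_coeff xs f = term_coeff ys f"
    using term_coeff_eq_zero[of "xs @ ?neg ys" f] assms by simp
qed

lemma eval_terms_transfer:
  assumes "Zring_terms xs" "Zring_terms ys" "eval_terms M xs = eval_terms M ys"
  shows "eval_terms W xs = eval_terms W ys"
proof -
  let ?S = "snd ` set xs \<union> snd ` set ys"
  have "eval_terms W xs = (\<Sum>f\<in>?S. \<iota> (term_coeff xs f) * W f)"
    using assms(1) by (intro eval_terms_by_coeff) auto
  also have "\<dots> = (\<Sum>f\<in>?S. \<iota> (term_coeff ys f) * W f)"
    using term_coeff_unique[OF assms] by simp
  also have "\<dots> = eval_terms W ys"
    using assms(2) by (intro eval_terms_by_coeff[symmetric]) auto
  finally show ?thesis .
qed

lemma Zring_terms_terms_mult: "Zring_terms xs \<Longrightarrow> Zring_terms ys \<Longrightarrow> Zring_terms (terms_mult xs ys)"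
  by (force simp: terms_mult_def Zring_terms_def intro!: Zring_mult Zring_powi)

lemma eval_terms_mult:
  assumes W: "twisted_mult W" and "Zring_terms xs" "Zring_terms ys"
  shows "eval_terms W (terms_mult xs ys) = eval_terms W xs * eval_terms W ys"
  using assms(2)
proof (induction xs)
  case (Cons p xs)
  have single:
    "eval_terms W (map (\<lambda>q. (fst p * fst q * z powi \<Lambda> (snd p) (snd q), snd p + snd q)) ys)
      = \<iota> (fst p) * W (snd p) * eval_terms W ys"
    using assms(3)
  proof (induction ys)
    case (Cons q ys)
    have Z: "fst p \<in> Zring z" "fst q \<in> Zring z" "z powi \<Lambda> (snd p) (snd q) \<in> Zring z"
      using Cons.prems \<open>Zring_terms (p # xs)\<close> Zring_powi by auto
    then have "\<iota> (fst p * fst q * z powi \<Lambda> (snd p) (snd q))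
        = \<iota> (fst p) * \<iota> (fst q) * \<iota> (z powi \<Lambda> (snd p) (snd q))"
      by (simp add: \<iota>_mult Zring_mult Zring_subset_Qfield[THEN subsetD])
    then have "\<iota> (fst p * fst q * z powi \<Lambda> (snd p) (snd q)) * W (snd p + snd q)
        = \<iota> (fst p) * (\<iota> (fst q) * W (snd p)) * W (snd q)"
      using W unfolding twisted_mult_def by (simp add: mult.assoc)
    also have "\<dots> = \<iota> (fst p) * W (snd p) * (\<iota> (fst q) * W (snd q))"
      using \<iota>_central[of "fst q" "W (snd p)"] Z Zring_subset_Qfield
      by (simp add: mult.assoc subset_iff)
    finally have "\<iota> (fst p * fst q * z powi \<Lambda> (snd p) (snd q)) * W (snd p + snd q)
        = \<iota> (fst p) * W (snd p) * (\<iota> (fst q) * W (snd q))" .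
    moreover have "Zring_terms ys"
      using Cons.prems by simp
    ultimately show ?case
      using Cons.IH by (simp only: list.map eval_terms_simps(2) prod.sel distrib_left)
  qed simp
  show ?case
    using Cons by (simp add: terms_mult_def single distrib_right)
qed (simp add: terms_mult_def)

lemma twisted_mult_M: "twisted_mult M"
  by (simp add: twisted_mult_def M_mult)

definition torus :: "'a set" where
  "torus = {eval_terms M xs | xs. Zring_terms xs}"

lemma torus_eval_terms: "Zring_terms xs \<Longrightarrow> eval_terms M xs \<in> torus"
  by (auto simp: torus_def)

lemma torus_add:
  assumes "x \<in> torus" "y \<in> torus"
  shows "x + y \<in> torus"
proof -
  obtain xs ys where "Zring_terms xs" "x = eval_terms M xs" "Zring_terms ys" "y = eval_terms M ys"
    using assms unfolding torus_def by blast
  then show ?thesis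
    using torus_eval_terms[of "xs @ ys"] by simp
qed

lemma torus_mult:
  assumes "x \<in> torus" "y \<in> torus"
  shows "x * y \<in> torus"
proof -
  obtain xs ys where "Zring_terms xs" "x = eval_terms M xs" "Zring_terms ys" "y = eval_terms M ys"
    using assms unfolding torus_def by blast
  then show ?thesis
    using torus_eval_terms[of "terms_mult xs ys"]
    by (simp add: Zring_terms_terms_mult eval_terms_mult twisted_mult_M)
qed

lemma torus_\<iota>: "c \<in> Zring z \<Longrightarrow> \<iota> c \<in> torus"
  using torus_eval_terms[of "[(c, 0)]"] by simp

lemma torus_M: "M f \<in> torus"
  using torus_eval_terms[of "[(1, f)]"] by simp

lemma torus_one: "1 \<in> torus"
  using torus_M[of 0] by simp

lemma torus_image_subset_torus: "torus_image z \<iota> M \<subseteq> torus"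
proof
  fix x assume "x \<in> torus_image z \<iota> M"
  then obtain S c where x: "x = (\<Sum>f\<in>S. \<iota> (c f) * M f)" and S: "finite S" "\<forall>f\<in>S. c f \<in> Zring z"
    unfolding torus_image_def by blast
  obtain fs where fs: "set fs = S" "distinct fs"
    using finite_distinct_list[OF S(1)] by blast
  have "eval_terms M (map (\<lambda>f. (c f, f)) fs) = x"
    using fs by (simp add: x eval_terms_def o_def sum_list_distinct_conv_sum_set)
  moreover have "Zring_terms (map (\<lambda>f. (c f, f)) fs)"
    using fs S by (auto simp: Zring_terms_def)
  ultimately show "x \<in> torus"
    using torus_eval_terms by blast
qed

lemma right_fractions_torus: "right_fractions torus"
proof
  show "\<exists>a\<in>torus. \<exists>b\<in>torus. b \<noteq> 0 \<and> x = a * inverse b" for x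
    using right_fraction_of_torus_image[of x] torus_image_subset_torus by blast
qed (simp_all add: torus_one torus_add torus_mult)

definition torus_map :: "(('n \<Rightarrow> int) \<Rightarrow> 'a) \<Rightarrow> 'a \<Rightarrow> 'a" where
  "torus_map W x = eval_terms W (SOME xs. Zring_terms xs \<and> eval_terms M xs = x)"

lemma torus_map_eval_terms:
  assumes "Zring_terms xs"
  shows "torus_map W (eval_terms M xs) = eval_terms W xs"
proof -
  let ?ys = "SOME ys. Zring_terms ys \<and> eval_terms M ys = eval_terms M xs"
  have "Zring_terms ?ys \<and> eval_terms M ?ys = eval_terms M xs"
    by (rule someI[where P = "\<lambda>ys. Zring_terms ys \<and> eval_terms M ys = eval_terms M xs" and x = xs])
      (simp add: assms)
  then show ?thesis
    unfolding torus_map_def using eval_terms_transfer[of ?ys xs W] assms by simp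
qed

lemma torus_map_add:
  assumes "x \<in> torus" "y \<in> torus"
  shows "torus_map W (x + y) = torus_map W x + torus_map W y"
proof -
  obtain xs ys where "Zring_terms xs" "x = eval_terms M xs" "Zring_terms ys" "y = eval_terms M ys"
    using assms unfolding torus_def by blast
  then show ?thesis
    using torus_map_eval_terms[of "xs @ ys"] by (simp add: torus_map_eval_terms)
qed

lemma torus_map_mult:
  assumes "twisted_mult W" "x \<in> torus" "y \<in> torus"
  shows "torus_map W (x * y) = torus_map W x * torus_map W y"
proof -
  obtain xs ys where "Zring_terms xs" "x = eval_terms M xs" "Zring_terms ys" "y = eval_terms M ys"
    using assms(2,3) unfolding torus_def by blast
  then show ?thesis
    using assms(1)
    by (simp flip: eval_terms_mult add: twisted_mult_M Zring_terms_terms_mult torus_map_eval_terms)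
qed

lemma torus_map_M: "torus_map W (M f) = W f"
  using torus_map_eval_terms[of "[(1, f)]" W] by simp

lemma torus_map_one: "W 0 = 1 \<Longrightarrow> torus_map W 1 = 1"
  using torus_map_M[of W 0] by simp

lemma torus_map_\<iota>: "W 0 = 1 \<Longrightarrow> c \<in> Zring z \<Longrightarrow> torus_map W (\<iota> c) = \<iota> c"
  using torus_map_eval_terms[of "[(c, 0)]" W] by simp

lemma M_in_closed_set:
  assumes mult: "\<And>x y. x \<in> S \<Longrightarrow> y \<in> S \<Longrightarrow> x * y \<in> S"
    and inverse: "\<And>x. x \<in> S \<Longrightarrow> inverse x \<in> S"
    and scalars: "\<And>n. \<iota> (z powi n) \<in> S"
    and basis: "\<And>j. M (ebasis j) \<in> S"
  shows "M f \<in> S"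
proof -
  have "f \<in> {f. M f \<in> S}"
  proof (rule ebasis_generates)
    show "0 \<in> {f. M f \<in> S}"
      using scalars[of 0] by simp
    show "f + g \<in> {f. M f \<in> S}" if "f \<in> {f. M f \<in> S}" "g \<in> {f. M f \<in> S}" for f g
      using that by (simp add: M_add mult scalars)
    show "- f \<in> {f. M f \<in> S}" if "f \<in> {f. M f \<in> S}" for f
      using that by (simp add: M_uminus mult inverse scalars)
  qed (simp add: basis)
  then show ?thesis by simp
qed

lemma eval_terms_concat: "eval_terms W (concat xss) = (\<Sum>xs\<leftarrow>xss. eval_terms W xs)"
  by (induction xss) simp_all

lemma Zring_terms_concat: "Zring_terms (concat xss) \<longleftrightarrow> (\<forall>xs\<in>set xss. Zring_terms xs)"
  by (induction xss) simp_all

lemma term_coeff_concat: "term_coeff (concat xss) f = (\<Sum>xs\<leftarrow>xss. term_coeff xs f)"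
  by (induction xss) simp_all

lemma term_coeff_terms_mult_single:
  "term_coeff (terms_mult xs [(1, e)]) f = term_coeff xs (f - e) * z powi \<Lambda> (f - e) e"
proof (induction xs)
  case (Cons p xs)
  have "snd p + e = f \<longleftrightarrow> snd p = f - e"
    by (auto simp: algebra_simps)
  with Cons show ?case
    by (auto simp: terms_mult_def distrib_right)
qed (simp add: terms_mult_def)

lemma torus_sum: "(\<And>m. m \<in> A \<Longrightarrow> x m \<in> torus) \<Longrightarrow> (\<Sum>m\<in>A. x m) \<in> torus"
  by (induction A rule: infinite_finite_induct)
    (simp_all add: torus_add torus_eval_terms[of "[]", simplified])

lemma torus_map_sum:
  "(\<And>m. m \<in> A \<Longrightarrow> x m \<in> torus) \<Longrightarrow> torus_map W (\<Sum>m\<in>A. x m) = (\<Sum>m\<in>A. torus_map W (x m))"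
proof (induction A rule: infinite_finite_induct)
  case (infinite A)
  then show ?case using torus_map_eval_terms[of "[]" W] by simp
next
  case empty
  then show ?case using torus_map_eval_terms[of "[]" W] by simp
next
  case (insert m A)
  then show ?case by (simp add: torus_map_add torus_sum)
qed

lemma torus_subset_closed_set:
  assumes "0 \<in> S" "\<And>x y. x \<in> S \<Longrightarrow> y \<in> S \<Longrightarrow> x + y \<in> S" "\<And>x y. x \<in> S \<Longrightarrow> y \<in> S \<Longrightarrow> x * y \<in> S"
    and "\<And>c. c \<in> Zring z \<Longrightarrow> \<iota> c \<in> S" "\<And>f. M f \<in> S"
  shows "torus \<subseteq> S"
proof -
  have "Zring_terms xs \<Longrightarrow> eval_terms M xs \<in> S" for xs
    by (induction xs) (simp_all add: assms)
  then show ?thesis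
    unfolding torus_def by blast
qed

lemma K_alg_automorphism_eqI:
  assumes \<sigma>\<^sub>1: "K_alg_automorphism z \<iota> \<sigma>\<^sub>1" and \<sigma>\<^sub>2: "K_alg_automorphism z \<iota> \<sigma>\<^sub>2"
    and basis: "\<And>j. \<sigma>\<^sub>1 (M (ebasis j)) = \<sigma>\<^sub>2 (M (ebasis j))"
  shows "\<sigma>\<^sub>1 = \<sigma>\<^sub>2"
proof (rule right_fractions.unital_ring_hom_eqI[OF right_fractions_torus])
  let ?S = "{x. \<sigma>\<^sub>1 x = \<sigma>\<^sub>2 x}"
  note hom = K_alg_automorphism_unital_ring_hom[OF \<sigma>\<^sub>1] K_alg_automorphism_unital_ring_hom[OF \<sigma>\<^sub>2]
  have scalars: "\<sigma>\<^sub>1 (\<iota> c) = \<sigma>\<^sub>2 (\<iota> c)" if "c \<in> Zring z" for c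
    using that Zring_subset_Qfield K_alg_automorphism_fixes_scalars[OF \<sigma>\<^sub>1]
      K_alg_automorphism_fixes_scalars[OF \<sigma>\<^sub>2]
    by (simp add: subset_iff)
  have M: "\<sigma>\<^sub>1 (M f) = \<sigma>\<^sub>2 (M f)" for f
    using M_in_closed_set[of ?S f]
    by (simp add: basis scalars Zring_powi unital_ring_homD(3)[OF hom(1)]
        unital_ring_homD(3)[OF hom(2)]
        unital_ring_hom_inverse[OF hom(1)] unital_ring_hom_inverse[OF hom(2)])
  have "torus \<subseteq> ?S"
    by (rule torus_subset_closed_set)
      (simp_all add: M scalars unital_ring_homD[OF hom(1)] unital_ring_homD[OF hom(2)])
  then show "t \<in> torus \<Longrightarrow> \<sigma>\<^sub>1 t = \<sigma>\<^sub>2 t" for t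
    by blast
qed (use K_alg_automorphism_unital_ring_hom \<sigma>\<^sub>1 \<sigma>\<^sub>2 in blast)+

end

section \<open>The mutation automorphism\<close>

locale mutation_frame = root_frame l z \<iota> M \<Lambda>
  for l :: nat and z :: complex and \<iota> :: "complex \<Rightarrow> 'a::division_ring"
    and M :: "('n::finite \<Rightarrow> int) \<Rightarrow> 'a" and \<Lambda> :: "('n \<Rightarrow> int) \<Rightarrow> ('n \<Rightarrow> int) \<Rightarrow> int" +
  fixes k :: 'n and h :: "'n \<Rightarrow> int"
  assumes h_k: "h k = 0"
    and \<Lambda>_h_basis: "j \<noteq> k \<Longrightarrow> [\<Lambda> h (ebasis j) = 0] (mod int l)"
begin

lemma \<Lambda>_h_right: "[\<Lambda> h v = v k * \<Lambda> h (ebasis k)] (mod int l)"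
proof -
  have "[(\<Sum>j\<in>UNIV. v j * \<Lambda> h (ebasis j))
      = (\<Sum>j\<in>UNIV. if j = k then v k * \<Lambda> h (ebasis k) else 0)] (mod int l)"
    using cong_scalar_left[OF \<Lambda>_h_basis] by (intro cong_sum) auto
  then show ?thesis
    using \<Lambda>_expand_right[of h v] by (simp add: cong_trans)
qed

lemma M_h_commute: "M h * M v = \<iota> (z powi (2 * \<Lambda> h (ebasis k) * v k)) * M v * M h"
proof -
  have "[\<Lambda> h v - \<Lambda> v h = \<Lambda> h v - - \<Lambda> h v] (mod int l)"
    using \<Lambda>_skew[of v h] by (intro cong_diff) auto
  also have "[\<Lambda> h v - - \<Lambda> h v = 2 * \<Lambda> h (ebasis k) * v k] (mod int l)"
    using cong_scalar_left[OF \<Lambda>_h_right[of v], of 2] by (simp add: algebra_simps)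
  finally have "z powi (2 * \<Lambda> h (ebasis k) * v k) = z powi (\<Lambda> h v + - \<Lambda> v h)"
    by (metis cong_sym diff_conv_add_uminus powi_cong)
  then have "\<iota> (z powi (2 * \<Lambda> h (ebasis k) * v k)) * M v * M h
      = \<iota> (z powi \<Lambda> h v) * (\<iota> (z powi (- \<Lambda> v h)) * \<iota> (z powi \<Lambda> v h)) * M (v + h)"
    by (simp only: \<iota>_powi_add M_mult mult.assoc)
  then show ?thesis
    by (simp add: \<iota>_powi_uminus M_mult add.commute)
qed

(* The exponent is chosen so that Q x * M v = M v * Q (x + v k) and M (ebasis k) * Q 0 =
   M (ebasis k) + M (ebasis k + h). *)
definition Q :: "int \<Rightarrow> 'a" where
  "Q x = 1 + \<iota> (z powi (2 * \<Lambda> h (ebasis k) * x - \<Lambda> (ebasis k) h)) * M h"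

lemma Q_M_shift: "Q x * M v = M v * Q (x + v k)"
proof -
  let ?c = "\<lambda>x. z powi (2 * \<Lambda> h (ebasis k) * x - \<Lambda> (ebasis k) h)"
  have "Q x * M v = M v + \<iota> (?c x) * \<iota> (z powi (2 * \<Lambda> h (ebasis k) * v k)) * M v * M h"
    by (simp add: Q_def distrib_right mult.assoc M_h_commute)
  also have "\<iota> (?c x) * \<iota> (z powi (2 * \<Lambda> h (ebasis k) * v k)) = \<iota> (?c (x + v k))"
    by (simp add: \<iota>_powi_add[symmetric] algebra_simps)
  also have "M v + \<iota> (?c (x + v k)) * M v * M h = M v * Q (x + v k)"
    by (simp add: Q_def distrib_left \<iota>_powi_central mult.assoc)
  finally show ?thesis .
qed

lemma commute_Q: "y * M h = M h * y \<Longrightarrow> y * Q x = Q x * y"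
  by (simp add: Q_def distrib_left distrib_right mult.assoc \<iota>_powi_central)
    (simp add: mult.assoc[symmetric] \<iota>_powi_central)

lemma Q_nonzero: "Q x \<noteq> 0"
proof (cases "h = 0")
  case True
  have "[\<Lambda> 0 (ebasis k) = 0] (mod int l)"
    using \<Lambda>_skew[of 0 "ebasis k"] \<Lambda>_zero_right[of "ebasis k"]
    by (metis cong_minus_minus_iff cong_trans minus_zero)
  then have "[2 * \<Lambda> h (ebasis k) * x - \<Lambda> (ebasis k) h = 0] (mod int l)"
    using \<Lambda>_zero_right[of "ebasis k"] True by (simp add: cong_0_iff)
  then have "z powi (2 * \<Lambda> h (ebasis k) * x - \<Lambda> (ebasis k) h) = 1"
    using powi_cong by fastforce
  then have "Q x = 1 + M h"
    by (simp add: Q_def)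
  also have "\<dots> = \<iota> 2"
    using True \<iota>_add[of 1 1] by simp
  finally have "Q x = \<iota> 2" .
  then show ?thesis
    using \<iota>_nonzero[of 2] Zring_of_int[of 2 z] by simp
next
  case False
  let ?c = "\<lambda>f. if f = 0 then 1 else z powi (2 * \<Lambda> h (ebasis k) * x - \<Lambda> (ebasis k) h)"
  have "(\<Sum>f\<in>{0, h}. \<iota> (?c f) * M f) = Q x"
    using False by (simp add: Q_def)
  moreover have "?c f \<in> Zring z" for f
    by (simp add: Zring_powi)
  ultimately show ?thesis
    using M_independent[of "{0, h}" ?c 0] by auto
qed

definition R :: "int \<Rightarrow> 'a" where
  "R n = (if 0 \<le> n then prod_list (map Q [0..n - 1]) else inverse (prod_list (map Q [n..-1])))"

lemma prod_list_Q_nonzero: "prod_list (map Q xs) \<noteq> 0"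
  by (induction xs) (simp_all add: Q_nonzero)

lemma R_zero [simp]: "R 0 = 1"
  by (simp add: R_def)

lemma R_nonpos: "n \<le> 0 \<Longrightarrow> R n = inverse (prod_list (map Q [n..-1]))"
  by (cases "n = 0") (simp_all add: R_def)

lemma R_nonzero: "R n \<noteq> 0"
  by (simp add: R_def prod_list_Q_nonzero)

lemma R_succ: "R (n + 1) = R n * Q n"
proof (cases "0 \<le> n")
  case True
  then show ?thesis
    by (simp add: R_def upto_rec2[of 0 n])
next
  case False
  then have "R n = inverse (prod_list (map Q [n + 1..-1])) * inverse (Q n)"
    by (simp add: R_def upto_rec1[of n "-1"] nonzero_inverse_mult_distrib Q_nonzero
        prod_list_Q_nonzero)
  also have "\<dots> = R (n + 1) * inverse (Q n)"
    using False by (simp add: R_nonpos)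
  finally show ?thesis
    by (simp add: inverse_cancel Q_nonzero)
qed

lemma R_pred: "R (n - 1) = R n * inverse (Q (n - 1))"
  using R_succ[of "n - 1"] by (simp add: inverse_cancel Q_nonzero)

lemma commute_R:
  assumes "y * M h = M h * y"
  shows "y * R n = R n * y"
proof -
  have "y * prod_list (map Q xs) = prod_list (map Q xs) * y" for xs
    using commute_Q[OF assms] by (intro mult_commute_prod_list) auto
  then show ?thesis
    by (simp add: R_def mult_commute_imp_mult_inverse_commute)
qed

lemma Q_commute_R: "Q x * R n = R n * Q x"
  using commute_R[OF commute_Q[of "M h", OF refl, symmetric]] .

lemma inverse_Q_M_shift: "inverse (Q x) * M v = M v * inverse (Q (x + v k))"
proof -
  have "inverse (Q x) * M v = inverse (Q x) * (M v * Q (x + v k)) * inverse (Q (x + v k))"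
    by (simp add: mult.assoc inverse_cancel Q_nonzero)
  also have "\<dots> = M v * inverse (Q (x + v k))"
    by (simp add: Q_M_shift[symmetric] inverse_cancel Q_nonzero mult.assoc[symmetric])
  finally show ?thesis .
qed

lemma R_M_R: "R n * M v * R (v k) = M v * R (n + v k)"
proof (induction n rule: int_induct[where k = 0])
  case (step1 n)
  have "R (n + 1) * M v * R (v k) = R n * (Q n * M v) * R (v k)"
    by (simp add: R_succ mult.assoc)
  also have "\<dots> = R n * M v * R (v k) * Q (n + v k)"
    by (simp add: Q_M_shift mult.assoc Q_commute_R)
  also have "\<dots> = M v * R (n + v k + 1)"
    by (simp only: step1(2) R_succ) (rule mult.assoc)
  finally show ?case
    by (simp add: ac_simps)
next
  case (step2 n)
  have "R (n - 1) * M v * R (v k) = R n * (inverse (Q (n - 1)) * M v) * R (v k)"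
    by (simp add: R_pred mult.assoc)
  also have "\<dots> = R n * M v * R (v k) * inverse (Q (n + v k - 1))"
    by (simp add: inverse_Q_M_shift mult.assoc mult_commute_imp_mult_inverse_commute[OF Q_commute_R]
        algebra_simps)
  also have "\<dots> = M v * R (n + v k - 1)"
    by (simp only: step2(2) R_pred) (rule mult.assoc)
  finally show ?case
    by (simp add: algebra_simps)
qed simp

definition Y :: "('n \<Rightarrow> int) \<Rightarrow> 'a" where
  "Y f = M f * R (f k)"

lemma twisted_mult_Y: "twisted_mult Y"
  unfolding twisted_mult_def
proof (intro allI)
  fix f g
  have "Y f * Y g = M f * (R (f k) * M g * R (g k))"
    by (simp add: Y_def mult.assoc)
  also have "\<dots> = M f * M g * R (f k + g k)"
    unfolding R_M_R by (rule mult.assoc[symmetric])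
  also have "\<dots> = \<iota> (z powi \<Lambda> f g) * Y (f + g)"
    by (simp add: Y_def M_mult mult.assoc)
  finally show "Y f * Y g = \<iota> (z powi \<Lambda> f g) * Y (f + g)" .
qed

lemma Y_degree_zero: "f k = 0 \<Longrightarrow> Y f = M f"
  by (simp add: Y_def)

lemma Y_zero: "Y 0 = 1"
  by (simp add: Y_degree_zero)

lemma Y_ebasis: "j \<noteq> k \<Longrightarrow> Y (ebasis j) = M (ebasis j)"
  by (simp add: Y_degree_zero ebasis_def)

lemma Y_ebasis_k: "Y (ebasis k) = M (ebasis k) + M (ebasis k + h)"
proof -
  have "Y (ebasis k) = M (ebasis k) * Q 0"
    using R_succ[of 0] by (simp add: Y_def ebasis_def)
  also have "\<dots> = M (ebasis k) + M (ebasis k) * \<iota> (z powi (- \<Lambda> (ebasis k) h)) * M h"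
    by (simp add: Q_def distrib_left mult.assoc)
  also have "M (ebasis k) * \<iota> (z powi (- \<Lambda> (ebasis k) h))
      = \<iota> (z powi (- \<Lambda> (ebasis k) h)) * M (ebasis k)"
    by (rule \<iota>_powi_central[symmetric])
  also have "\<iota> (z powi (- \<Lambda> (ebasis k) h)) * M (ebasis k) * M h = M (ebasis k + h)"
    by (simp add: M_mult mult.assoc \<iota>_powi_uminus flip: mult.assoc[of "\<iota> _"])
  finally show ?thesis .
qed

lemma M_R_swap: "M v * R (v k) = inverse (R (- v k)) * M v"
proof -
  have "M v * R (v k) = inverse (R (- v k)) * (R (- v k) * M v * R (v k))"
    by (simp add: inverse_cancel R_nonzero mult.assoc)
  also have "\<dots> = inverse (R (- v k)) * M v"
    by (simp only: R_M_R) simp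
  finally show ?thesis .
qed

definition ek :: "int \<Rightarrow> 'n \<Rightarrow> int" where
  "ek m = (\<lambda>i. if i = k then m else 0)"

lemma ek_apply_k [simp]: "ek m k = m"
  by (simp add: ek_def)

definition torus_deg0 :: "'a set" where
  "torus_deg0 = {eval_terms M xs | xs. Zring_terms xs \<and> (\<forall>p\<in>set xs. snd p k = 0)}"

lemma torus_deg0_subset_torus: "torus_deg0 \<subseteq> torus"
  by (auto simp: torus_deg0_def torus_def)

lemma torus_deg0_zero: "0 \<in> torus_deg0"
  unfolding torus_deg0_def by (auto intro!: exI[of _ "[]"])

lemma torus_deg0_add:
  assumes "x \<in> torus_deg0" "y \<in> torus_deg0"
  shows "x + y \<in> torus_deg0"
proof -
  obtain xs ys where "Zring_terms xs" "\<forall>p\<in>set xs. snd p k = 0" "x = eval_terms M xs"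
    and "Zring_terms ys" "\<forall>p\<in>set ys. snd p k = 0" "y = eval_terms M ys"
    using assms unfolding torus_deg0_def by blast
  then show ?thesis
    unfolding torus_deg0_def by (force intro!: exI[of _ "xs @ ys"])
qed

lemma torus_deg0_mult:
  assumes "x \<in> torus_deg0" "y \<in> torus_deg0"
  shows "x * y \<in> torus_deg0"
proof -
  obtain xs ys where "Zring_terms xs" "\<forall>p\<in>set xs. snd p k = 0" "x = eval_terms M xs"
    and "Zring_terms ys" "\<forall>p\<in>set ys. snd p k = 0" "y = eval_terms M ys"
    using assms unfolding torus_deg0_def by blast
  moreover from this have "\<forall>p\<in>set (terms_mult xs ys). snd p k = 0"
    by (auto simp: terms_mult_def)
  ultimately have "Zring_terms (terms_mult xs ys) \<and> (\<forall>p\<in>set (terms_mult xs ys). snd p k = 0)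
      \<and> x * y = eval_terms M (terms_mult xs ys)"
    by (simp add: Zring_terms_terms_mult eval_terms_mult twisted_mult_M)
  then show ?thesis
    unfolding torus_deg0_def by blast
qed

lemma torus_deg0_term: "c \<in> Zring z \<Longrightarrow> f k = 0 \<Longrightarrow> \<iota> c * M f \<in> torus_deg0"
  unfolding torus_deg0_def by (auto intro!: exI[of _ "[(c, f)]"])

lemma Q_in_torus_deg0: "Q x \<in> torus_deg0"
  using torus_deg0_add[OF torus_deg0_term[of 1 0] torus_deg0_term[of _ h, OF Zring_powi h_k]]
  by (simp add: Q_def)

lemma inverse_R_uminus_in_torus_deg0:
  assumes "0 \<le> m"
  shows "inverse (R (- m)) \<in> torus_deg0"
proof -
  have "prod_list (map Q xs) \<in> torus_deg0" for xs
    using torus_deg0_term[of 1 0] by (induction xs) (simp_all add: torus_deg0_mult Q_in_torus_deg0)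
  then show ?thesis
    using assms by (simp add: R_nonpos)
qed

lemma torus_map_Y_torus_deg0:
  assumes "t \<in> torus_deg0"
  shows "torus_map Y t = t"
proof -
  obtain xs where xs: "Zring_terms xs" "\<forall>p\<in>set xs. snd p k = 0" "t = eval_terms M xs"
    using assms unfolding torus_deg0_def by blast
  have "eval_terms Y xs = eval_terms M xs"
    using xs(2) by (intro eval_terms_cong) (simp add: Y_degree_zero)
  then show ?thesis
    using xs by (simp add: torus_map_eval_terms)
qed

lemma graded_decomposition:
  assumes "Zring_terms xs" "finite A" "\<And>p. p \<in> set xs \<Longrightarrow> snd p k \<in> A"
  shows "\<exists>c. (\<forall>m. c m \<in> torus_deg0) \<and> eval_terms M xs = (\<Sum>m\<in>A. c m * M (ek m))"
  using assms(1,3)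
proof (induction xs)
  case Nil
  show ?case
    using torus_deg0_zero by (intro exI[of _ "\<lambda>_. 0"]) simp
next
  case (Cons p xs)
  then obtain c where c: "\<forall>m. c m \<in> torus_deg0" "eval_terms M xs = (\<Sum>m\<in>A. c m * M (ek m))"
    by auto
  define m0 where "m0 = snd p k"
  define f where "f = snd p - ek m0"
  define a where "a = fst p * z powi (- \<Lambda> f (ek m0))"
  have "fst p \<in> Zring z"
    using Cons.prems(1) by simp
  then have t0: "\<iota> a * M f \<in> torus_deg0"
    by (intro torus_deg0_term) (simp_all add: a_def f_def m0_def Zring_mult Zring_powi)
  have "\<iota> a * M f * M (ek m0)
      = \<iota> (fst p) * (\<iota> (z powi (- \<Lambda> f (ek m0))) * \<iota> (z powi \<Lambda> f (ek m0))) * M (snd p)"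
    using \<open>fst p \<in> Zring z\<close> Zring_powi Zring_subset_Qfield
    by (simp add: a_def f_def \<iota>_mult M_mult mult.assoc subset_iff)
  then have p_term: "\<iota> (fst p) * M (snd p) = \<iota> a * M f * M (ek m0)"
    by (simp add: \<iota>_powi_uminus)
  define c' where "c' m = c m + (if m = m0 then \<iota> a * M f else 0)" for m
  have "\<forall>m. c' m \<in> torus_deg0"
    using c(1) t0 torus_deg0_zero by (simp add: c'_def torus_deg0_add)
  moreover have "eval_terms M (p # xs) = (\<Sum>m\<in>A. c' m * M (ek m))"
    using c(2) p_term Cons.prems(2)[of p] assms(2)
    by (simp add: c'_def distrib_right sum.distrib m0_def if_distrib[of "\<lambda>x. x * _"] cong: if_cong)
  ultimately show ?case
    by blast
qed

lemma graded_independence: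
  assumes "finite A" "\<And>m. m \<in> A \<Longrightarrow> c m \<in> torus_deg0"
    and "(\<Sum>m\<in>A. c m * M (ek m)) = 0" "m0 \<in> A"
  shows "c m0 = 0"
proof -
  have "\<forall>m\<in>A. \<exists>xs. Zring_terms xs \<and> (\<forall>p\<in>set xs. snd p k = 0) \<and> c m = eval_terms M xs"
    using assms(2) unfolding torus_deg0_def by blast
  then obtain xs where xs: "\<And>m. m \<in> A \<Longrightarrow> Zring_terms (xs m)"
    "\<And>m p. m \<in> A \<Longrightarrow> p \<in> set (xs m) \<Longrightarrow> snd p k = 0" "\<And>m. m \<in> A \<Longrightarrow> c m = eval_terms M (xs m)"
    by metis
  obtain ms where ms: "set ms = A" "distinct ms"
    using finite_distinct_list[OF assms(1)] by blast
  define L where "L = concat (map (\<lambda>m. terms_mult (xs m) [(1, ek m)]) ms)"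
  have "Zring_terms L"
    using xs(1) ms(1) by (simp add: L_def Zring_terms_concat Zring_terms_terms_mult)
  moreover have "eval_terms M L = 0"
    using assms(3) xs(1,3) ms
    by (simp add: L_def eval_terms_concat eval_terms_mult twisted_mult_M o_def
        sum_list_distinct_conv_sum_set)
  ultimately have coeff_L: "term_coeff L f = 0" for f
    by (rule term_coeff_eq_zero)
  have "term_coeff (xs m0) f = 0" for f
  proof (cases "f k = 0")
    case True
    have "term_coeff (xs m) (f + ek m0 - ek m) = 0" if "m \<in> A" "m \<noteq> m0" for m
      using that True xs(2)[of m] by (intro term_coeff_notin) force
    then have "term_coeff L (f + ek m0)
        = (\<Sum>m\<in>A. if m = m0 then term_coeff (xs m0) f * z powi \<Lambda> f (ek m0) else 0)"
      using ms by (auto simp: L_def term_coeff_concat term_coeff_terms_mult_single o_def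
          sum_list_distinct_conv_sum_set intro!: sum.cong)
    then have "term_coeff (xs m0) f * z powi \<Lambda> f (ek m0) = 0"
      using coeff_L assms(1,4) by simp
    then show ?thesis
      using z_nonzero by simp
  next
    case False
    then show ?thesis
      using xs(2)[OF assms(4)] by (intro term_coeff_notin) force
  qed
  then show ?thesis
    using eval_terms_eq_zero xs(1,3) assms(4) by metis
qed

lemma torus_map_Y_graded:
  assumes "\<And>m. m \<in> A \<Longrightarrow> c m \<in> torus_deg0"
  shows "torus_map Y (\<Sum>m\<in>A. c m * M (ek m)) = (\<Sum>m\<in>A. c m * inverse (R (- m)) * M (ek m))"
proof -
  have torus: "c m \<in> torus" if "m \<in> A" for m
    using assms[OF that] torus_deg0_subset_torus by blast
  have "torus_map Y (c m * M (ek m)) = c m * inverse (R (- m)) * M (ek m)" if "m \<in> A" for m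
    using M_R_swap[of "ek m"] assms[OF that] torus[OF that]
    by (simp add: torus_map_mult twisted_mult_Y torus_M torus_map_M torus_map_Y_torus_deg0 Y_def
        mult.assoc)
  then show ?thesis
    using torus by (simp add: torus_map_sum torus_mult torus_M)
qed

lemma torus_map_Y_eq_zero_nonneg:
  assumes "Zring_terms xs" "\<And>p. p \<in> set xs \<Longrightarrow> 0 \<le> snd p k" "torus_map Y (eval_terms M xs) = 0"
  shows "eval_terms M xs = 0"
proof -
  let ?A = "(\<lambda>p. snd p k) ` set xs"
  obtain c where c: "\<And>m. c m \<in> torus_deg0" "eval_terms M xs = (\<Sum>m\<in>?A. c m * M (ek m))"
    using graded_decomposition[OF assms(1), of ?A] by auto
  have "(\<Sum>m\<in>?A. c m * inverse (R (- m)) * M (ek m)) = 0"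
    using assms(3) c by (simp add: torus_map_Y_graded)
  then have "c m * inverse (R (- m)) = 0" if "m \<in> ?A" for m
    using that assms(2) c(1)
    by (intro graded_independence[of ?A "\<lambda>m. c m * inverse (R (- m))"])
      (auto intro: torus_deg0_mult inverse_R_uminus_in_torus_deg0)
  then have "c m = 0" if "m \<in> ?A" for m
    using that R_nonzero by simp
  then show ?thesis
    using c(2) by simp
qed

lemma torus_map_Y_nonzero:
  assumes "t \<in> torus" "t \<noteq> 0"
  shows "torus_map Y t \<noteq> 0"
proof
  assume Y_t: "torus_map Y t = 0"
  obtain xs where xs: "Zring_terms xs" "t = eval_terms M xs"
    using assms(1) unfolding torus_def by blast
  \<comment> \<open>Make all k-th exponents nonnegative, where the factors \<open>inverse (R (- m))\<close> are
    of degree zero.\<close>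
  define N where "N = int (\<Sum>p\<leftarrow>xs. nat \<bar>snd p k\<bar>)"
  define xs' where "xs' = terms_mult xs [(1, ek N)]"
  have "Zring_terms xs'"
    using xs(1) by (simp add: xs'_def Zring_terms_terms_mult)
  moreover have "0 \<le> snd p k" if p: "p \<in> set xs'" for p
  proof -
    obtain q where "q \<in> set xs" "snd p = snd q + ek N"
      using p by (auto simp: xs'_def terms_mult_def)
    moreover from this have "nat \<bar>snd q k\<bar> \<le> (\<Sum>p\<leftarrow>xs. nat \<bar>snd p k\<bar>)"
      by (intro member_le_sum_list) auto
    ultimately show ?thesis
      by (simp add: N_def)
  qed
  moreover have t': "eval_terms M xs' = t * M (ek N)"
    using xs by (simp add: xs'_def eval_terms_mult twisted_mult_M)
  moreover have "torus_map Y (t * M (ek N)) = 0"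
    using Y_t assms(1) by (simp add: torus_map_mult twisted_mult_Y torus_M)
  ultimately have "t * M (ek N) = 0"
    using torus_map_Y_eq_zero_nonneg by metis
  then show False
    using assms(2) M_nonzero by simp
qed

end

lemma (in root_frame) mutation_frame_smult:
  assumes "g k = 0" "\<And>j. j \<noteq> k \<Longrightarrow> [\<Lambda> g (ebasis j) = 0] (mod int l)"
  shows "mutation_frame l z \<iota> M \<Lambda> k (\<lambda>i. s * g i)"
proof unfold_locales
  show "s * g k = 0"
    using assms(1) by simp
  show "[\<Lambda> (\<lambda>i. s * g i) (ebasis j) = 0] (mod int l)" if "j \<noteq> k" for j
    using \<Lambda>_smult_left[of s g "ebasis j"] cong_scalar_left[OF assms(2)[OF that], of s]
    by (simp add: cong_trans)
qed

sublocale mutation_frame \<subseteq> mutation: fraction_hom torus "torus_map Y"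
proof -
  interpret right_fractions torus
    by (rule right_fractions_torus)
  show "fraction_hom torus (torus_map Y)"
    by unfold_locales
      (simp_all add: torus_map_add torus_map_mult twisted_mult_Y torus_map_Y_nonzero torus_map_one
        Y_zero)
qed

context mutation_frame
begin

lemma mutation_M: "mutation.extend (M f) = Y f"
  by (simp add: mutation.extend_on torus_M torus_map_M)

lemma mutation_scalars:
  assumes "c \<in> Qfield z"
  shows "mutation.extend (\<iota> c) = \<iota> c"
proof -
  obtain a b where ab: "a \<in> Zring z" "b \<in> Zring z" "b \<noteq> 0" "c * b = a"
    using Qfield_ratio_Zring[OF assms] by blast
  have fixed: "mutation.extend (\<iota> x) = \<iota> x" if "x \<in> Zring z" for x
    using that by (simp add: mutation.extend_on torus_\<iota> torus_map_\<iota> Y_zero)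
  have "\<iota> a = \<iota> c * \<iota> b"
    using \<iota>_mult[OF assms, of b] ab(2,4) Zring_subset_Qfield by auto
  then have "\<iota> c = \<iota> a * inverse (\<iota> b)"
    using \<iota>_nonzero[OF ab(2,3)] by (simp add: inverse_cancel)
  then have "mutation.extend (\<iota> c) = mutation.extend (\<iota> a) * inverse (mutation.extend (\<iota> b))"
    using unital_ring_homD(3)[OF mutation.unital_ring_hom_extend]
      unital_ring_hom_inverse[OF mutation.unital_ring_hom_extend] by simp
  also have "\<dots> = \<iota> c"
    using ab(1,2) \<open>\<iota> c = \<iota> a * inverse (\<iota> b)\<close> by (simp add: fixed)
  finally show ?thesis .
qed

lemma M_in_range_mutation: "M f \<in> range mutation.extend"
proof (rule M_in_closed_set)
  note closed = unital_ring_hom_range[OF mutation.unital_ring_hom_extend]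
  show "x * y \<in> range mutation.extend"
    if "x \<in> range mutation.extend" "y \<in> range mutation.extend" for x y
    using that by (rule closed(3))
  show "inverse x \<in> range mutation.extend" if "x \<in> range mutation.extend" for x
    using that by (rule closed(4))
  show scalars: "\<iota> (z powi n) \<in> range mutation.extend" for n
    using mutation_scalars[of "z powi n"] Zring_powi Zring_subset_Qfield by (metis rangeI subsetD)
  show "M (ebasis j) \<in> range mutation.extend" for j
  proof (cases "j = k")
    case True
    have "M h \<in> range mutation.extend"
      using mutation_M[of h] by (metis Y_degree_zero h_k rangeI)
    moreover have "1 \<in> range mutation.extend"
      using unital_ring_homD(1)[OF mutation.unital_ring_hom_extend] by (metis rangeI)
    ultimately have "Q 0 \<in> range mutation.extend"
      unfolding Q_def by (intro closed(2,3) scalars)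
    moreover have "M (ebasis k) = mutation.extend (M (ebasis k)) * inverse (Q 0)"
      using R_succ[of 0] by (simp add: mutation_M Y_def ebasis_def inverse_cancel Q_nonzero)
    ultimately show ?thesis
      using True closed(3,4) by (metis rangeI)
  next
    case False
    then show ?thesis
      using mutation_M[of "ebasis j"] Y_ebasis by (metis rangeI)
  qed
qed

lemma K_alg_automorphism_mutation: "K_alg_automorphism z \<iota> mutation.extend"
proof -
  note hom = mutation.unital_ring_hom_extend
  note closed = unital_ring_hom_range[OF hom]
  have scalars: "\<iota> c \<in> range mutation.extend" if "c \<in> Zring z" for c
    using that mutation_scalars Zring_subset_Qfield by (metis rangeI subsetD)
  have "range mutation.extend = UNIV"
  proof (rule right_fractions.closed_superset_eq_UNIV[OF right_fractions_torus])
    show "torus \<subseteq> range mutation.extend"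
      by (rule torus_subset_closed_set) (simp_all add: closed scalars M_in_range_mutation)
  qed (simp_all add: closed)
  then show ?thesis
    using hom unital_ring_hom_inj[OF hom] mutation_scalars
    by (simp add: K_alg_automorphism_def unital_ring_hom_def bij_def)
qed

end

theorem proposition3p5:
  fixes l :: nat and z :: complex and \<iota> :: "complex \<Rightarrow> 'a::division_ring"
    and M :: "('n::finite \<Rightarrow> int) \<Rightarrow> 'a" and \<Lambda> :: "('n \<Rightarrow> int) \<Rightarrow> ('n \<Rightarrow> int) \<Rightarrow> int"
    and k :: 'n and g :: "'n \<Rightarrow> int" and s :: int
  assumes "0 < l"
    and "primitive_root_of_unity l z"
    and "K_algebra z \<iota>"
    and "toric_frame l z \<iota> M \<Lambda>"
    and "\<forall>j. j \<noteq> k \<longrightarrow> [\<Lambda> g (ebasis j) = 0] (mod int l)"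
    and "g k = 0"
    and "s \<in> {1, -1}"
  shows "\<exists>!\<rho>. K_alg_automorphism z \<iota> \<rho> \<and>
           \<rho> (M (ebasis k)) = M (ebasis k) + M (ebasis k + (\<lambda>i. s * g i)) \<and>
           (\<forall>j. j \<noteq> k \<longrightarrow> \<rho> (M (ebasis j)) = M (ebasis j))"
proof -
  interpret root_frame l z \<iota> M \<Lambda>
    using assms(1-4) by unfold_locales
  interpret mutation_frame l z \<iota> M \<Lambda> k "\<lambda>i. s * g i"
    using mutation_frame_smult assms(5,6) by blast
  show ?thesis
  proof (rule ex1I)
    show "K_alg_automorphism z \<iota> mutation.extend \<and>
        mutation.extend (M (ebasis k)) = M (ebasis k) + M (ebasis k + (\<lambda>i. s * g i)) \<and>
        (\<forall>j. j \<noteq> k \<longrightarrow> mutation.extend (M (ebasis j)) = M (ebasis j))"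
      by (simp add: K_alg_automorphism_mutation mutation_M Y_ebasis_k Y_ebasis)
    show "\<sigma> = mutation.extend"
      if "K_alg_automorphism z \<iota> \<sigma> \<and>
        \<sigma> (M (ebasis k)) = M (ebasis k) + M (ebasis k + (\<lambda>i. s * g i)) \<and>
        (\<forall>j. j \<noteq> k \<longrightarrow> \<sigma> (M (ebasis j)) = M (ebasis j))" for \<sigma>
    proof (rule K_alg_automorphism_eqI)
      show "\<sigma> (M (ebasis j)) = mutation.extend (M (ebasis j))" for j
        using that by (cases "j = k") (simp_all add: mutation_M Y_ebasis_k Y_ebasis)
    qed (use that K_alg_automorphism_mutation in auto)
  qed
qed

end
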